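(* Let $(S,\to)$ be a labelled transition system with a merge $\|$. If $s\leftrightarrow_b^{\Delta}t$ and $u\leftrightarrow_b^{\Delta}v$, then $s\|u\leftrightarrow_b^{\Delta}t\|v$.
   Context: Fix a set $\mathrm{Act}$ of actions containing a special action $\tau$. A labelled transition system (LTS) is a pair $(S,\to)$ with $S$ a set of states and $\to\subseteq S\times\mathrm{Act}\times S$; write $s\xrightarrow{a}s'$ for $(s,a,s')\in\to$. A path from $s$ is an alternating sequence $s_0,a_1,s_1,a_2,\dots$ of states and actions, ending with a state if finite, with $s_0=s$ and $s_{k-1}\xrightarrow{a_k}s_k$ for all relevant $k$. A colouring is a function $\mathcal{C}$ from $S$ to an arbitrary set of colours. For a path $\pi=s_0,a_1,s_1,\dots$, $\mathcal{C}(\pi)$ is the alternating sequence obtained from $\mathcal{C}(s_0),a_1,\mathcal{C}(s_1),a_2,\dots$ by contracting every finite maximal consecutive subsequence of the form $C,\tau,C,\tau,\dots,\tau,C$ and every infinite maximal consecutive subsequence $C,\tau,C,\tau,\dots$ to $C$. The sequences $\mathcal{C}(\pi)$ with $\pi$ a path from $s$ are the $\mathcal{C}$-coloured traces of $s$; $\mathcal{C}(\pi)$ is a divergent $\mathcal{C}$-coloured trace of $s$ if $\pi$ is an infinite path from $s$ and $\mathcal{C}(\pi)$ is finite. A colouring is consistent if any two states of the same colour have the same $\mathcal{C}$-coloured traces, and a consistent colouring preserves divergence if any two states of the same colour have the same divergent $\mathcal{C}$-coloured traces. $s\leftrightarrow_b^{\Delta}t$ (branching bisimulation equivalence with explicit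 divergence) iff there is a consistent, divergence preserving colouring $\mathcal{C}$ with $\mathcal{C}(s)=\mathcal{C}(t)$. A binary operation $\|$ on $S$ is a merge if for all $s,t,u\in S$ and $a\in\mathrm{Act}$: $s\|t\xrightarrow{a}u$ iff either there is $s'$ with $s\xrightarrow{a}s'$ and $u=s'\|t$, or there is $t'$ with $t\xrightarrow{a}t'$ and $u=s\|t'$. *)

theory Defs
  imports Main "HOL-Library.Infinite_Set"
begin

datatype ('a, 'c) ctrace = FinT 'c "('a \<times> 'c) list" | InfT 'c "nat \<Rightarrow> ('a \<times> 'c)"

(* A finite path from s0 is given by its list of steps (a_k, s_k), k = 1..n. *)
definition fin_path :: "('s \<Rightarrow> 'a \<Rightarrow> 's \<Rightarrow> bool) \<Rightarrow> 's \<Rightarrow> ('a \<times> 's) list \<Rightarrow> bool" where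
  "fin_path tr s0 xs \<longleftrightarrow>
     (\<forall>i < length xs. tr ((s0 # map snd xs) ! i) (fst (xs ! i)) (snd (xs ! i)))"

definition inf_state :: "'s \<Rightarrow> (nat \<Rightarrow> 'a \<times> 's) \<Rightarrow> nat \<Rightarrow> 's" where
  "inf_state s0 f i = (if i = 0 then s0 else snd (f (i - 1)))"

definition inf_path :: "('s \<Rightarrow> 'a \<Rightarrow> 's \<Rightarrow> bool) \<Rightarrow> 's \<Rightarrow> (nat \<Rightarrow> 'a \<times> 's) \<Rightarrow> bool" where
  "inf_path tr s0 f \<longleftrightarrow> (\<forall>i. tr (inf_state s0 f i) (fst (f i)) (snd (f i)))"

(* Contraction of maximal blocks C,tau,C,...,tau,C (finite or infinite) to C amounts
   exactly to deleting every step a_k, C(s_k) with a_k = tau and C(s_k) = C(s_(k-1)). *)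
definition fin_visible :: "'a \<Rightarrow> ('s \<Rightarrow> 'c) \<Rightarrow> 's \<Rightarrow> ('a \<times> 's) list \<Rightarrow> nat \<Rightarrow> bool" where
  "fin_visible tau C s0 xs i \<longleftrightarrow>
     fst (xs ! i) \<noteq> tau \<or> C (snd (xs ! i)) \<noteq> C ((s0 # map snd xs) ! i)"

definition fin_ctrace :: "'a \<Rightarrow> ('s \<Rightarrow> 'c) \<Rightarrow> 's \<Rightarrow> ('a \<times> 's) list \<Rightarrow> ('a, 'c) ctrace" where
  "fin_ctrace tau C s0 xs =
     FinT (C s0) (map (\<lambda>i. (fst (xs ! i), C (snd (xs ! i))))
                      (filter (fin_visible tau C s0 xs) [0..<length xs]))"

definition inf_visible :: "'a \<Rightarrow> ('s \<Rightarrow> 'c) \<Rightarrow> 's \<Rightarrow> (nat \<Rightarrow> 'a \<times> 's) \<Rightarrow> nat set" where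
  "inf_visible tau C s0 f = {i. fst (f i) \<noteq> tau \<or> C (snd (f i)) \<noteq> C (inf_state s0 f i)}"

definition inf_ctrace :: "'a \<Rightarrow> ('s \<Rightarrow> 'c) \<Rightarrow> 's \<Rightarrow> (nat \<Rightarrow> 'a \<times> 's) \<Rightarrow> ('a, 'c) ctrace" where
  "inf_ctrace tau C s0 f =
     (let V = inf_visible tau C s0 f; g = (\<lambda>i. (fst (f i), C (snd (f i)))) in
      if finite V then FinT (C s0) (map g (sorted_list_of_set V))
      else InfT (C s0) (\<lambda>n. g (enumerate V n)))"

definition ctraces :: "'a \<Rightarrow> ('s \<Rightarrow> 'a \<Rightarrow> 's \<Rightarrow> bool) \<Rightarrow> ('s \<Rightarrow> 'c) \<Rightarrow> 's \<Rightarrow> ('a, 'c) ctrace set" where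
  "ctraces tau tr C s =
     {fin_ctrace tau C s xs | xs. fin_path tr s xs} \<union>
     {inf_ctrace tau C s f | f. inf_path tr s f}"

definition div_ctraces :: "'a \<Rightarrow> ('s \<Rightarrow> 'a \<Rightarrow> 's \<Rightarrow> bool) \<Rightarrow> ('s \<Rightarrow> 'c) \<Rightarrow> 's \<Rightarrow> ('a, 'c) ctrace set" where
  "div_ctraces tau tr C s =
     {inf_ctrace tau C s f | f. inf_path tr s f \<and> finite (inf_visible tau C s f)}"

definition consistent :: "'a \<Rightarrow> ('s \<Rightarrow> 'a \<Rightarrow> 's \<Rightarrow> bool) \<Rightarrow> ('s \<Rightarrow> 'c) \<Rightarrow> bool" where
  "consistent tau tr C \<longleftrightarrow>
     (\<forall>s t. C s = C t \<longrightarrow> ctraces tau tr C s = ctraces tau tr C t)"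

definition div_preserving :: "'a \<Rightarrow> ('s \<Rightarrow> 'a \<Rightarrow> 's \<Rightarrow> bool) \<Rightarrow> ('s \<Rightarrow> 'c) \<Rightarrow> bool" where
  "div_preserving tau tr C \<longleftrightarrow>
     (\<forall>s t. C s = C t \<longrightarrow> div_ctraces tau tr C s = div_ctraces tau tr C t)"

(* Colours are taken in 's set: any colouring can be replaced by the one mapping
   a state to its colour class, without changing consistency/divergence preservation. *)
definition bbisim_div :: "'a \<Rightarrow> ('s \<Rightarrow> 'a \<Rightarrow> 's \<Rightarrow> bool) \<Rightarrow> 's \<Rightarrow> 's \<Rightarrow> bool" where
  "bbisim_div tau tr s t \<longleftrightarrow>
     (\<exists>C :: 's \<Rightarrow> 's set. consistent tau tr C \<and> div_preserving tau tr C \<and> C s = C t)"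

definition is_merge :: "('s \<Rightarrow> 'a \<Rightarrow> 's \<Rightarrow> bool) \<Rightarrow> ('s \<Rightarrow> 's \<Rightarrow> 's) \<Rightarrow> bool" where
  "is_merge tr mrg \<longleftrightarrow>
     (\<forall>s t u a. tr (mrg s t) a u \<longleftrightarrow>
        (\<exists>s'. tr s a s' \<and> u = mrg s' t) \<or> (\<exists>t'. tr t a t' \<and> u = mrg s t'))"

end

theory Submission
  imports Defs "HOL-Library.Sublist"
begin

(* Let C1 and C2 be consistent, divergence preserving colourings witnessing s ~ t and u ~ v.
   Colour every state by its class under the equivalence generated by relating p || q with
   p' || q' whenever C1 p = C1 p' and C2 q = C2 q'. Consistency of C1 (resp. C2) answers a step
   of one component by inert tau-steps followed by the same action into the same colour, and the
   same answer lifts to the merge. Finite paths are matched step by step; an infinite path is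
   matched by the limit of the answers to its prefixes, unless these eventually stop growing:
   then the remaining steps are inert tau-steps, infinitely many of them in one component, and
   divergence preservation of that component yields a divergence on the other side. Hence
   related merges have the same (divergent) coloured traces, and so do all states of one class. *)

primrec visible :: "'a \<Rightarrow> ('s \<Rightarrow> 'c) \<Rightarrow> 's \<Rightarrow> ('a \<times> 's) list \<Rightarrow> ('a \<times> 'c) list" where
  "visible tau C x [] = []"
| "visible tau C x (st # xs) =
     (if fst st \<noteq> tau \<or> C (snd st) \<noteq> C x then [(fst st, C (snd st))] else []) @
     visible tau C (snd st) xs"

primrec path_end :: "'s \<Rightarrow> ('a \<times> 's) list \<Rightarrow> 's" where
  "path_end x [] = x"
| "path_end x (st # xs) = path_end (snd st) xs"

lemma path_end_append [simp]: "path_end x (xs @ ys) = path_end (path_end x xs) ys"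
  by (induction xs arbitrary: x) auto

lemma visible_append: "visible tau C x (xs @ ys) = visible tau C x xs @ visible tau C (path_end x xs) ys"
  by (induction xs arbitrary: x) auto

lemma fin_path_Nil [simp]: "fin_path tr x []"
  by (simp add: fin_path_def)

lemma fin_path_Cons [simp]:
  "fin_path tr x (st # xs) \<longleftrightarrow> tr x (fst st) (snd st) \<and> fin_path tr (snd st) xs"
  unfolding fin_path_def by (auto simp: nth_Cons split: nat.splits)

lemma fin_path_append: "fin_path tr x (xs @ ys) \<longleftrightarrow> fin_path tr x xs \<and> fin_path tr (path_end x xs) ys"
  by (induction xs arbitrary: x) auto

lemma fin_path_map:
  assumes "\<And>x b y. tr x b y \<Longrightarrow> tr (K x) b (K y)" "fin_path tr x xs"
  shows "fin_path tr (K x) (map (apsnd K) xs)"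
  using assms(2) by (induction xs arbitrary: x) (auto intro: assms(1))

lemma fin_ctrace_eq_visible: "fin_ctrace tau C x xs = FinT (C x) (visible tau C x xs)"
proof (induction xs arbitrary: x)
  case Nil
  then show ?case by (simp add: fin_ctrace_def)
next
  case (Cons st xs)
  have visible_Suc: "fin_visible tau C x (st # xs) (Suc i) = fin_visible tau C (snd st) xs i" for i
    by (simp add: fin_visible_def)
  have "[0..<length (st # xs)] = 0 # map Suc [0..<length xs]"
    by (simp add: map_Suc_upt upt_conv_Cons del: upt_Suc)
  then have "map (\<lambda>i. (fst ((st # xs) ! i), C (snd ((st # xs) ! i))))
                 (filter (fin_visible tau C x (st # xs)) [0..<length (st # xs)])
     = (if fin_visible tau C x (st # xs) 0 then [(fst st, C (snd st))] else []) @
       map (\<lambda>i. (fst (xs ! i), C (snd (xs ! i)))) (filter (fin_visible tau C (snd st) xs) [0..<length xs])"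
    by (simp add: filter_map o_def visible_Suc)
  moreover have "fin_visible tau C x (st # xs) 0 \<longleftrightarrow> fst st \<noteq> tau \<or> C (snd st) \<noteq> C x"
    by (simp add: fin_visible_def)
  ultimately show ?case
    using Cons[of "snd st"] by (simp add: fin_ctrace_def)
qed

lemma visible_silent:
  assumes "\<forall>p\<in>set ys. fst p = tau \<and> C (snd p) = C y"
  shows "visible tau C y ys = [] \<and> C (path_end y ys) = C y"
  using assms by (induction ys arbitrary: y) auto

lemma visible_eq_singletonE:
  assumes "visible tau C y zs = [(a, c)]"
  obtains ys z rest where "zs = ys @ (a, z) # rest" "\<forall>q\<in>set ys. fst q = tau \<and> C (snd q) = C y" "C z = c"
  using assms
proof (induction zs arbitrary: y)
  case (Cons p zs)
  show ?case
  proof (cases "fst p \<noteq> tau \<or> C (snd p) \<noteq> C y")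
    case True
    then have "fst p = a" "C (snd p) = c"
      using Cons.prems by auto
    then show ?thesis
      using Cons.prems(1)[of "[]" "snd p" zs] by auto
  next
    case False
    then have "visible tau C (snd p) zs = [(a, c)]"
      using Cons.prems by simp
    then show ?thesis
      using Cons.IH[of "snd p"] Cons.prems(1)[of "p # _"] False by auto
  qed
qed simp

lemma inf_state_0 [simp]: "inf_state x f 0 = x"
  by (simp add: inf_state_def)

lemma inf_state_Suc [simp]: "inf_state x f (Suc i) = snd (f i)"
  by (simp add: inf_state_def)

lemma path_end_upt: "path_end x (map f [0..<n]) = inf_state x f n"
  by (induction n) (auto simp: inf_state_def)

lemma fin_path_inf_path_prefix: "inf_path tr x f \<Longrightarrow> fin_path tr x (map f [0..<n])"
proof (induction n)
  case (Suc n)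
  then show ?case
    unfolding upt_Suc_append[OF le0] map_append fin_path_append path_end_upt
    by (simp add: inf_path_def)
qed simp

lemma inf_path_map:
  assumes "\<And>x b y. tr x b y \<Longrightarrow> tr (K x) b (K y)" "inf_path tr x f"
  shows "inf_path tr (K x) (apsnd K \<circ> f)"
proof -
  have "inf_state (K x) (apsnd K \<circ> f) i = K (inf_state x f i)" for i
    by (cases i) auto
  then show ?thesis
    using assms unfolding inf_path_def by auto
qed

lemma inf_state_silent:
  assumes "\<forall>i. fst (g i) = tau \<and> C (snd (g i)) = C (inf_state p g i)"
  shows "C (inf_state p g i) = C p"
  using assms by (induction i) auto

section \<open>Coloured traces of infinite paths as limits of finite prefixes\<close>

definition coloured_step :: "('s \<Rightarrow> 'c) \<Rightarrow> (nat \<Rightarrow> 'a \<times> 's) \<Rightarrow> nat \<Rightarrow> 'a \<times> 'c" where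
  "coloured_step C f i = (fst (f i), C (snd (f i)))"

definition prefix_trace :: "'a \<Rightarrow> ('s \<Rightarrow> 'c) \<Rightarrow> 's \<Rightarrow> (nat \<Rightarrow> 'a \<times> 's) \<Rightarrow> nat \<Rightarrow> ('a \<times> 'c) list" where
  "prefix_trace tau C x f n = visible tau C x (map f [0..<n])"

lemma prefix_trace_eq_filter:
  "prefix_trace tau C x f n = map (coloured_step C f) (filter (\<lambda>i. i \<in> inf_visible tau C x f) [0..<n])"
proof (induction n)
  case (Suc n)
  then show ?case
    unfolding prefix_trace_def upt_Suc_append[OF le0] map_append visible_append path_end_upt
    by (auto simp: inf_visible_def coloured_step_def)
qed (simp add: prefix_trace_def)

lemma prefix_trace_Suc:
  "prefix_trace tau C x f (Suc n) = prefix_trace tau C x f n @ visible tau C (inf_state x f n) [f n]"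
  unfolding prefix_trace_def upt_Suc_append[OF le0] map_append visible_append path_end_upt
  by simp

lemma prefix_trace_mono: "n \<le> m \<Longrightarrow> prefix (prefix_trace tau C x f n) (prefix_trace tau C x f m)"
  by (rule prefix_order.lift_Suc_mono_le) (simp_all add: prefix_trace_Suc)

lemma prefix_trace_eventually_const:
  assumes "finite (inf_visible tau C x f)"
  obtains B where "\<And>n. B \<le> n \<Longrightarrow>
    prefix_trace tau C x f n = map (coloured_step C f) (sorted_list_of_set (inf_visible tau C x f))"
proof -
  let ?V = "inf_visible tau C x f"
  obtain B where B: "?V \<subseteq> {..<B}"
    using assms finite_nat_bounded by blast
  have "filter (\<lambda>i. i \<in> ?V) [0..<n] = sorted_list_of_set ?V" if "B \<le> n" for n
    using B that assms by (intro sorted_distinct_set_unique) (auto simp: sorted_wrt_filter)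
  then show ?thesis
    using that[of B] by (simp add: prefix_trace_eq_filter)
qed

lemma length_prefix_trace_le_card:
  assumes "finite (inf_visible tau C x f)"
  shows "length (prefix_trace tau C x f n) \<le> card (inf_visible tau C x f)"
proof -
  let ?V = "inf_visible tau C x f"
  have "length (filter (\<lambda>i. i \<in> ?V) [0..<n]) = card (set (filter (\<lambda>i. i \<in> ?V) [0..<n]))"
    by (metis distinct_card distinct_filter distinct_upt)
  also have "\<dots> \<le> card ?V"
    using assms by (intro card_mono) auto
  finally show ?thesis
    by (simp add: prefix_trace_eq_filter)
qed

lemma in_set_below_enumerate:
  fixes V :: "nat set"
  assumes "infinite V" "i < enumerate V k"
  shows "i \<in> V \<longleftrightarrow> (\<exists>j<k. i = enumerate V j)"
proof
  assume "i \<in> V"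
  then obtain j where "i = enumerate V j"
    using enumerate_Ex[OF assms(1)] by metis
  with assms show "\<exists>j<k. i = enumerate V j"
    by auto
qed (use enumerate_in_set[OF assms(1)] in blast)

lemma filter_upt_enumerate:
  fixes V :: "nat set"
  assumes "infinite V"
  shows "filter (\<lambda>i. i \<in> V) [0..<Suc (enumerate V k)] = map (enumerate V) [0..<Suc k]"
proof (induction k)
  case 0
  have "filter (\<lambda>i. i \<in> V) [0..<enumerate V 0] = []"
    using in_set_below_enumerate[OF assms] by (auto simp: filter_empty_conv)
  then show ?case
    using enumerate_in_set[OF assms] by simp
next
  case (Suc k)
  let ?e = "enumerate V"
  have "Suc (?e k) \<le> ?e (Suc k)"
    using enumerate_step[OF assms] by (simp add: Suc_le_eq)
  then have "[0..<Suc (?e (Suc k))] = [0..<Suc (?e k)] @ [Suc (?e k)..<?e (Suc k)] @ [?e (Suc k)]"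
    using upt_add_eq_append[of 0 "Suc (?e k)" "?e (Suc k) - Suc (?e k)"] by simp
  moreover have "filter (\<lambda>i. i \<in> V) [Suc (?e k)..<?e (Suc k)] = []"
    using in_set_below_enumerate[OF assms, of _ "Suc k"] assms
    by (auto simp: filter_empty_conv less_Suc_eq dest: enumerate_mono[OF _ assms])
  ultimately show ?case
    using Suc enumerate_in_set[OF assms] by simp
qed

lemma prefix_trace_enumerate:
  assumes "infinite (inf_visible tau C x f)"
  shows "prefix_trace tau C x f (Suc (enumerate (inf_visible tau C x f) k)) =
           map (coloured_step C f \<circ> enumerate (inf_visible tau C x f)) [0..<Suc k]"
  by (simp add: prefix_trace_eq_filter filter_upt_enumerate[OF assms] del: upt_Suc)

lemma prefix_nth_eq: "prefix xs zs \<Longrightarrow> prefix ys zs \<Longrightarrow> k < length xs \<Longrightarrow> k < length ys \<Longrightarrow> xs ! k = ys ! k"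
  by (metis nth_append prefix_def)

lemma finite_inf_visible_if_cofinal:
  assumes "\<forall>n. \<exists>m. prefix (prefix_trace tau C x f n) (prefix_trace tau C y g m)"
    and "finite (inf_visible tau C y g)"
  shows "finite (inf_visible tau C x f)"
proof (rule ccontr)
  let ?V = "inf_visible tau C x f"
  assume inf: "infinite ?V"
  define k where "k = card (inf_visible tau C y g)"
  obtain m where "prefix (prefix_trace tau C x f (Suc (enumerate ?V k))) (prefix_trace tau C y g m)"
    using assms(1) by blast
  then have "length (prefix_trace tau C x f (Suc (enumerate ?V k))) \<le> k"
    using length_prefix_trace_le_card[OF assms(2), of m] prefix_length_le unfolding k_def by fastforce
  then show False
    using prefix_trace_enumerate[OF inf, of k] by simp
qed

lemma sorted_visible_steps_eq_if_cofinal: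
  assumes "finite (inf_visible tau C x f)" "finite (inf_visible tau C y g)"
    and xy: "\<forall>n. \<exists>m. prefix (prefix_trace tau C x f n) (prefix_trace tau C y g m)"
    and yx: "\<forall>m. \<exists>n. prefix (prefix_trace tau C y g m) (prefix_trace tau C x f n)"
  shows "map (coloured_step C f) (sorted_list_of_set (inf_visible tau C x f)) =
         map (coloured_step C g) (sorted_list_of_set (inf_visible tau C y g))" (is "?lf = ?lg")
proof -
  let ?pf = "prefix_trace tau C x f" and ?pg = "prefix_trace tau C y g"
  obtain Bf where Bf: "\<And>n. Bf \<le> n \<Longrightarrow> ?pf n = ?lf"
    using prefix_trace_eventually_const[OF assms(1)] by blast
  obtain Bg where Bg: "\<And>n. Bg \<le> n \<Longrightarrow> ?pg n = ?lg"
    using prefix_trace_eventually_const[OF assms(2)] by blast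
  have pf: "prefix (?pf n) ?lf" for n
    using prefix_trace_mono[of n "max n Bf" tau C x f] Bf[of "max n Bf"] by simp
  have pg: "prefix (?pg n) ?lg" for n
    using prefix_trace_mono[of n "max n Bg" tau C y g] Bg[of "max n Bg"] by simp
  obtain m where "prefix (?pf Bf) (?pg m)"
    using xy by blast
  then have "prefix ?lf ?lg"
    using Bf pg by (metis order.refl prefix_order.trans)
  moreover obtain n where "prefix (?pg Bg) (?pf n)"
    using yx by blast
  then have "prefix ?lg ?lf"
    using Bg pf by (metis order.refl prefix_order.trans)
  ultimately show "?lf = ?lg"
    by (rule prefix_order.antisym)
qed

lemma enumerated_visible_steps_eq_if_cofinal:
  assumes "infinite (inf_visible tau C x f)" "infinite (inf_visible tau C y g)"
    and xy: "\<forall>n. \<exists>m. prefix (prefix_trace tau C x f n) (prefix_trace tau C y g m)"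
  shows "coloured_step C f (enumerate (inf_visible tau C x f) k) =
         coloured_step C g (enumerate (inf_visible tau C y g) k)"
proof -
  let ?Vf = "inf_visible tau C x f" and ?Vg = "inf_visible tau C y g"
  let ?pf = "prefix_trace tau C x f" and ?pg = "prefix_trace tau C y g"
  let ?a = "?pf (Suc (enumerate ?Vf k))" and ?b = "?pg (Suc (enumerate ?Vg k))"
  obtain m where "prefix ?a (?pg m)"
    using xy by blast
  let ?z = "?pg (max m (Suc (enumerate ?Vg k)))"
  have "prefix ?a ?z"
    using \<open>prefix ?a (?pg m)\<close> prefix_trace_mono[of m] by (meson max.cobounded1 prefix_order.trans)
  moreover have "prefix ?b ?z"
    using prefix_trace_mono by (metis max.cobounded2)
  ultimately show ?thesis
    using prefix_nth_eq[of ?a ?z ?b k] prefix_trace_enumerate[OF assms(1), of k]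
      prefix_trace_enumerate[OF assms(2), of k]
    by (simp del: upt_Suc)
qed

lemma inf_ctrace_eqI:
  assumes "C x = C y"
    and xy: "\<forall>n. \<exists>m. prefix (prefix_trace tau C x f n) (prefix_trace tau C y g m)"
    and yx: "\<forall>m. \<exists>n. prefix (prefix_trace tau C y g m) (prefix_trace tau C x f n)"
  shows "inf_ctrace tau C x f = inf_ctrace tau C y g"
proof (cases "finite (inf_visible tau C x f)")
  case True
  then have "finite (inf_visible tau C y g)"
    using finite_inf_visible_if_cofinal[OF yx] by blast
  then show ?thesis
    using True assms sorted_visible_steps_eq_if_cofinal[OF True]
    by (simp add: inf_ctrace_def Let_def coloured_step_def[symmetric])
next
  case False
  then have "infinite (inf_visible tau C y g)"
    using finite_inf_visible_if_cofinal[OF xy] by blast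
  then show ?thesis
    using False assms enumerated_visible_steps_eq_if_cofinal[OF False]
    by (simp add: inf_ctrace_def Let_def coloured_step_def[symmetric])
qed

lemma inf_ctrace_eq_if_prefix_trace_reindexed:
  assumes "C x = C y"
    and reindexed: "\<And>n. prefix_trace tau C x f (h n) = prefix_trace tau C y g n"
    and unbounded: "\<And>k. \<exists>n. k \<le> h n"
  shows "inf_ctrace tau C x f = inf_ctrace tau C y g"
proof (rule inf_ctrace_eqI[where C = C and x = x and y = y, OF assms(1)])
  show "\<forall>k. \<exists>n. prefix (prefix_trace tau C x f k) (prefix_trace tau C y g n)"
  proof
    fix k
    obtain n where "k \<le> h n"
      using unbounded by blast
    then have "prefix (prefix_trace tau C x f k) (prefix_trace tau C x f (h n))"
      by (rule prefix_trace_mono)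
    then show "\<exists>n. prefix (prefix_trace tau C x f k) (prefix_trace tau C y g n)"
      using reindexed by (intro exI[of _ n]) simp
  qed
  show "\<forall>n. \<exists>k. prefix (prefix_trace tau C y g n) (prefix_trace tau C x f k)"
  proof
    fix n
    show "\<exists>k. prefix (prefix_trace tau C y g n) (prefix_trace tau C x f k)"
      using reindexed[of n] by (intro exI[of _ "h n"]) simp
  qed
qed

lemma inf_ctrace_eq_if_prefix_trace_eventually_eq:
  assumes "C x = C y"
    and x_const: "\<And>n. prefix_trace tau C x f (L + n) = l"
    and y_const: "\<And>n. N \<le> n \<Longrightarrow> prefix_trace tau C y g n = l"
  shows "inf_ctrace tau C x f = inf_ctrace tau C y g"
proof (rule inf_ctrace_eqI[where C = C and x = x and y = y, OF assms(1)])
  show "\<forall>n. \<exists>m. prefix (prefix_trace tau C x f n) (prefix_trace tau C y g m)"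
  proof
    fix n
    have "prefix (prefix_trace tau C x f n) (prefix_trace tau C x f (L + n))"
      by (rule prefix_trace_mono) simp
    then show "\<exists>m. prefix (prefix_trace tau C x f n) (prefix_trace tau C y g m)"
      using x_const[of n] y_const[of N] by (intro exI[of _ N]) simp
  qed
  show "\<forall>m. \<exists>n. prefix (prefix_trace tau C y g m) (prefix_trace tau C x f n)"
  proof
    fix m
    have "prefix (prefix_trace tau C y g m) (prefix_trace tau C y g (max m N))"
      by (rule prefix_trace_mono) simp
    then show "\<exists>n. prefix (prefix_trace tau C y g m) (prefix_trace tau C x f n)"
      using y_const[of "max m N"] x_const[of 0] by (intro exI[of _ L]) simp
  qed
qed

lemma inf_path_of_prefix_chain:
  assumes chain: "\<And>n. prefix (ys n) (ys (Suc n))"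
    and unbounded: "\<And>k. \<exists>n. k < length (ys n)"
    and path: "\<And>n. fin_path tr y (ys n)"
  obtains g where "inf_path tr y g" "\<And>n. map g [0..<length (ys n)] = ys n"
proof -
  define g where "g k = ys (LEAST n. k < length (ys n)) ! k" for k
  have g_nth: "g k = ys n ! k" if "k < length (ys n)" for k n
  proof -
    let ?m = "LEAST n. k < length (ys n)"
    have "k < length (ys ?m)"
      using unbounded by (meson LeastI_ex)
    moreover have "prefix (ys ?m) (ys n)"
      using that by (intro prefix_order.lift_Suc_mono_le[of ys, OF chain] Least_le)
    ultimately show ?thesis
      unfolding g_def using prefix_nth_eq[of "ys ?m" "ys n" "ys n" k] that by simp
  qed
  have "inf_path tr y g"
    unfolding inf_path_def
  proof
    fix i
    obtain n where n: "i < length (ys n)"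
      using unbounded by blast
    have "tr ((y # map snd (ys n)) ! i) (fst (ys n ! i)) (snd (ys n ! i))"
      using path n by (simp add: fin_path_def)
    moreover have "inf_state y g i = (y # map snd (ys n)) ! i"
      using n by (cases i) (auto intro!: arg_cong[where f = snd] g_nth)
    ultimately show "tr (inf_state y g i) (fst (g i)) (snd (g i))"
      using g_nth[OF n] by simp
  qed
  moreover have "map g [0..<length (ys n)] = ys n" for n
    by (rule nth_equalityI) (auto simp: g_nth)
  ultimately show ?thesis
    using that by blast
qed

lemma prefix_chain_eventually_const:
  assumes chain: "\<And>n. prefix (ys n) (ys (Suc n))" and bounded: "\<And>n. length (ys n) \<le> K"
  obtains N where "\<And>n. N \<le> n \<Longrightarrow> ys n = ys N"
proof -
  let ?lengths = "range (\<lambda>n. length (ys n))"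
  have "finite ?lengths"
    using bounded by (intro finite_nat_set_iff_bounded_le[THEN iffD2]) auto
  then have "Max ?lengths \<in> ?lengths"
    by (rule Max_in) simp
  then obtain N where N: "length (ys N) = Max ?lengths"
    by (metis rangeE)
  have "ys n = ys N" if "N \<le> n" for n
  proof -
    have "prefix (ys N) (ys n)"
      using that by (rule prefix_order.lift_Suc_mono_le[of ys, OF chain])
    moreover have "length (ys n) \<le> length (ys N)"
      using N Max_ge[OF \<open>finite ?lengths\<close>, of "length (ys n)"] by simp
    ultimately have "prefix (ys n) (ys N)"
      using prefix_length_prefix[of "ys n" "ys n" "ys N"] by simp
    then show ?thesis
      using \<open>prefix (ys N) (ys n)\<close> by (rule prefix_order.antisym)
  qed
  then show ?thesis
    using that by blast
qed

section \<open>Matching paths along a relation between presented states\<close>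

definition matching_step ::
  "'a \<Rightarrow> ('s \<Rightarrow> 'a \<Rightarrow> 's \<Rightarrow> bool) \<Rightarrow> ('s \<Rightarrow> 'c) \<Rightarrow> ('d \<Rightarrow> 's) \<Rightarrow> ('d \<Rightarrow> 'a \<Rightarrow> 'd \<Rightarrow> bool) \<Rightarrow>
   ('d \<Rightarrow> 'd \<Rightarrow> bool) \<Rightarrow> 'd \<Rightarrow> 'd \<Rightarrow> 'a \<Rightarrow> 's \<Rightarrow> 'd \<Rightarrow> 'd \<Rightarrow> ('a \<times> 's) list \<Rightarrow> bool" where
  "matching_step tau tr D st dstep R dx dy a x' dx' dy' seg \<longleftrightarrow>
     st dx' = x' \<and> dstep dx a dx' \<and> R dx' dy' \<and>
     fin_path tr (st dy) seg \<and> path_end (st dy) seg = st dy' \<and>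
     ((a = tau \<and> dy' = dy \<and> seg = []) \<or>
      (\<exists>ys. seg = ys @ [(a, st dy')] \<and> (\<forall>p\<in>set ys. fst p = tau \<and> D (snd p) = D (st dy))))"

text \<open>States are compared through presentations of type \<open>'d\<close> carrying their own step
  relation, because a merge need not be injective: a merged state is presented by the pair of its
  components, and a divergence of the merge has to be traced back to a divergence of one of them.\<close>

locale path_matching =
  fixes tau :: 'a and tr :: "'s \<Rightarrow> 'a \<Rightarrow> 's \<Rightarrow> bool" and D :: "'s \<Rightarrow> 'c"
    and st :: "'d \<Rightarrow> 's" and dstep :: "'d \<Rightarrow> 'a \<Rightarrow> 'd \<Rightarrow> bool" and R :: "'d \<Rightarrow> 'd \<Rightarrow> bool"
  assumes same_colour: "\<And>dx dy. R dx dy \<Longrightarrow> D (st dx) = D (st dy)"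
    and step_matching: "\<And>dx dy a x'. R dx dy \<Longrightarrow> tr (st dx) a x' \<Longrightarrow>
      \<exists>dx' dy' seg. matching_step tau tr D st dstep R dx dy a x' dx' dy' seg"
    and divergence_matching: "\<And>h dy. (\<And>i. dstep (h i) tau (h (Suc i)) \<and> R (h i) dy) \<Longrightarrow>
      \<exists>f. inf_path tr (st dy) f \<and> (\<forall>i. fst (f i) = tau \<and> D (snd (f i)) = D (st dy))"
begin

lemma visible_matching_step:
  assumes "R dx dy" "matching_step tau tr D st dstep R dx dy a x' dx' dy' seg"
  shows "visible tau D (st dx) [(a, x')] = visible tau D (st dy) seg"
proof -
  have colour_before: "D (st dx) = D (st dy)"
    using same_colour assms(1) .
  have colour_after: "D x' = D (st dy')"
    using assms(2) same_colour unfolding matching_step_def by metis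
  from assms(2) consider "a = tau" "dy' = dy" "seg = []"
    | ys where "seg = ys @ [(a, st dy')]" "\<forall>p\<in>set ys. fst p = tau \<and> D (snd p) = D (st dy)"
    unfolding matching_step_def by blast
  then show ?thesis
  proof cases
    case 1
    then show ?thesis
      using colour_before colour_after by simp
  next
    case (2 ys)
    then show ?thesis
      using visible_silent[OF 2(2)] colour_before colour_after by (simp add: visible_append)
  qed
qed

lemma fin_path_matching:
  "R dx dy \<Longrightarrow> fin_path tr (st dx) xs \<Longrightarrow>
    \<exists>ys. fin_path tr (st dy) ys \<and> visible tau D (st dy) ys = visible tau D (st dx) xs"
proof (induction xs arbitrary: dx dy)
  case Nil
  then show ?case
    by (intro exI[of _ "[]"]) simp
next
  case (Cons p xs)
  obtain a x1 where p: "p = (a, x1)"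
    by (cases p)
  have step: "tr (st dx) a x1" and rest: "fin_path tr x1 xs"
    using Cons.prems p by auto
  obtain dx' dy' seg where match: "matching_step tau tr D st dstep R dx dy a x1 dx' dy' seg"
    using step_matching[OF Cons.prems(1) step] by blast
  then have "R dx' dy'" "st dx' = x1" and seg: "fin_path tr (st dy) seg" "path_end (st dy) seg = st dy'"
    unfolding matching_step_def by auto
  then obtain ys where ys: "fin_path tr (st dy') ys" "visible tau D (st dy') ys = visible tau D x1 xs"
    using Cons.IH rest by metis
  have "visible tau D (st dx) (p # xs) = visible tau D (st dx) [(a, x1)] @ visible tau D x1 xs"
    using visible_append[of tau D "st dx" "[(a, x1)]" xs] p by simp
  also have "\<dots> = visible tau D (st dy) (seg @ ys)"
    using visible_matching_step[OF Cons.prems(1) match] ys(2) seg(2) by (simp add: visible_append)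
  finally show ?case
    using seg ys(1) by (intro exI[of _ "seg @ ys"]) (simp add: fin_path_append)
qed

context
  fixes dx dy :: 'd and f :: "nat \<Rightarrow> 'a \<times> 's"
  assumes related: "R dx dy" and path: "inf_path tr (st dx) f"
begin

primrec matched :: "nat \<Rightarrow> 'd \<times> 'd \<times> ('a \<times> 's) list" where
  "matched 0 = (dx, dy, [])"
| "matched (Suc n) = (SOME (x', y', seg). matching_step tau tr D st dstep R
     (fst (matched n)) (fst (snd (matched n))) (fst (f n)) (snd (f n)) x' y' seg)"

definition matched_left :: "nat \<Rightarrow> 'd" where
  "matched_left n = fst (matched n)"

definition matched_right :: "nat \<Rightarrow> 'd" where
  "matched_right n = fst (snd (matched n))"

definition matched_seg :: "nat \<Rightarrow> ('a \<times> 's) list" where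
  "matched_seg n = snd (snd (matched (Suc n)))"

definition matched_path :: "nat \<Rightarrow> ('a \<times> 's) list" where
  "matched_path n = concat (map matched_seg [0..<n])"

lemma matching_step_matched:
  assumes "R (matched_left n) (matched_right n)" "tr (st (matched_left n)) (fst (f n)) (snd (f n))"
  shows "matching_step tau tr D st dstep R (matched_left n) (matched_right n) (fst (f n)) (snd (f n))
           (matched_left (Suc n)) (matched_right (Suc n)) (matched_seg n)"
proof -
  let ?P = "\<lambda>(x', y', seg). matching_step tau tr D st dstep R (matched_left n) (matched_right n)
                              (fst (f n)) (snd (f n)) x' y' seg"
  have "\<exists>m. ?P m"
    using step_matching[OF assms] by auto
  then have "?P (matched (Suc n))"
    using someI_ex[of ?P] by (simp add: matched_left_def matched_right_def)
  then show ?thesis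
    by (cases "matched (Suc n)") (simp add: matched_left_def matched_right_def matched_seg_def)
qed

lemma matched_invariant:
  "R (matched_left n) (matched_right n) \<and> st (matched_left n) = inf_state (st dx) f n"
proof (induction n)
  case 0
  then show ?case
    using related by (simp add: matched_left_def matched_right_def)
next
  case (Suc n)
  then have "tr (st (matched_left n)) (fst (f n)) (snd (f n))"
    using path by (simp add: inf_path_def)
  then show ?case
    using matching_step_matched Suc by (auto simp: matching_step_def)
qed

lemma matching_step_matched_seg:
  "matching_step tau tr D st dstep R (matched_left n) (matched_right n) (fst (f n)) (snd (f n))
     (matched_left (Suc n)) (matched_right (Suc n)) (matched_seg n)"
  using matched_invariant[of n] path by (intro matching_step_matched) (simp_all add: inf_path_def)

lemma matched_path_Suc: "matched_path (Suc n) = matched_path n @ matched_seg n"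
  by (simp add: matched_path_def)

lemma matched_path_invariant:
  "fin_path tr (st dy) (matched_path n) \<and> path_end (st dy) (matched_path n) = st (matched_right n) \<and>
   visible tau D (st dy) (matched_path n) = prefix_trace tau D (st dx) f n"
proof (induction n)
  case 0
  then show ?case
    by (simp add: matched_path_def matched_right_def prefix_trace_def)
next
  case (Suc n)
  have match: "matching_step tau tr D st dstep R (matched_left n) (matched_right n) (fst (f n)) (snd (f n))
     (matched_left (Suc n)) (matched_right (Suc n)) (matched_seg n)"
    by (rule matching_step_matched_seg)
  then have seg: "fin_path tr (st (matched_right n)) (matched_seg n)"
    "path_end (st (matched_right n)) (matched_seg n) = st (matched_right (Suc n))"
    unfolding matching_step_def by auto
  have "visible tau D (st (matched_left n)) [f n] = visible tau D (st (matched_right n)) (matched_seg n)"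
    using visible_matching_step[OF _ match] matched_invariant[of n] by simp
  then show ?case
    using Suc seg matched_invariant[of n]
    by (simp add: matched_path_Suc fin_path_append visible_append prefix_trace_Suc)
qed

lemma inf_path_matching_unbounded:
  assumes "\<And>k. \<exists>n. k < length (matched_path n)"
  shows "\<exists>g. inf_path tr (st dy) g \<and> inf_ctrace tau D (st dy) g = inf_ctrace tau D (st dx) f"
proof -
  have chain: "prefix (matched_path n) (matched_path (Suc n))" for n
    by (simp add: matched_path_Suc)
  obtain g where g: "inf_path tr (st dy) g" "\<And>n. map g [0..<length (matched_path n)] = matched_path n"
    using inf_path_of_prefix_chain[OF chain assms] matched_path_invariant by metis
  have "prefix_trace tau D (st dy) g (length (matched_path n)) = prefix_trace tau D (st dx) f n" for n
    using g(2) matched_path_invariant by (simp add: prefix_trace_def)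
  moreover have "\<exists>n. k \<le> length (matched_path n)" for k
    using assms less_imp_le by blast
  ultimately have "inf_ctrace tau D (st dy) g = inf_ctrace tau D (st dx) f"
    using same_colour[OF related]
    by (intro inf_ctrace_eq_if_prefix_trace_reindexed[where h = "\<lambda>n. length (matched_path n)"]) simp_all
  then show ?thesis
    using g by blast
qed

text \<open>Once the answers stop growing, every further step of \<open>f\<close> is answered by staying at
  the same right-hand presentation, i.e.\ it is an inert \<open>\<tau>\<close>-step, and
  \<open>divergence_matching\<close> turns these steps into a divergence on the right.\<close>

lemma matched_eventually_divergent:
  assumes "\<And>n. length (matched_path n) \<le> K"
  obtains N t where "\<And>n. N \<le> n \<Longrightarrow> matched_path n = matched_path N"
    and "inf_path tr (st (matched_right N)) t"
    and "\<forall>i. fst (t i) = tau \<and> D (snd (t i)) = D (st (matched_right N))"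
proof -
  have "prefix (matched_path n) (matched_path (Suc n))" for n
    by (simp add: matched_path_Suc)
  then obtain N where stuck: "\<And>n. N \<le> n \<Longrightarrow> matched_path n = matched_path N"
    using prefix_chain_eventually_const assms by blast
  have Nil: "matched_seg n = []" if "N \<le> n" for n
    using stuck[of n] stuck[of "Suc n"] that by (simp add: matched_path_Suc)
  have inert: "matched_right (Suc n) = matched_right n \<and> dstep (matched_left n) tau (matched_left (Suc n))"
    if "N \<le> n" for n
    using matching_step_matched_seg[of n] Nil[OF that] unfolding matching_step_def by auto
  have right_const: "matched_right n = matched_right N" if "N \<le> n" for n
    using that by (induction n rule: dec_induct) (simp_all add: inert)
  have "dstep (matched_left (N + i)) tau (matched_left (Suc (N + i))) \<and> R (matched_left (N + i)) (matched_right N)"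
    for i
    using inert[of "N + i"] right_const[of "N + i"] matched_invariant[of "N + i"] by simp
  then show thesis
    using divergence_matching[of "\<lambda>i. matched_left (N + i)" "matched_right N"] that stuck by auto
qed

lemma inf_path_matching_bounded:
  assumes "\<And>n. length (matched_path n) \<le> K"
  shows "\<exists>g. inf_path tr (st dy) g \<and> inf_ctrace tau D (st dy) g = inf_ctrace tau D (st dx) f"
proof -
  obtain N t where stuck: "\<And>n. N \<le> n \<Longrightarrow> matched_path n = matched_path N"
    and t: "inf_path tr (st (matched_right N)) t"
      "\<forall>i. fst (t i) = tau \<and> D (snd (t i)) = D (st (matched_right N))"
    using matched_eventually_divergent assms by blast
  define ys where "ys n = matched_path N @ map t [0..<n]" for n
  have chain: "prefix (ys n) (ys (Suc n))" for n
    by (simp add: ys_def)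
  have unbounded: "\<exists>n. k < length (ys n)" for k
    by (rule exI[of _ "Suc k"]) (simp add: ys_def)
  have "fin_path tr (st dy) (ys n)" for n
    using matched_path_invariant[of N] fin_path_inf_path_prefix[OF t(1)]
    by (simp add: ys_def fin_path_append)
  then obtain g where g: "inf_path tr (st dy) g" "\<And>n. map g [0..<length (ys n)] = ys n"
    using inf_path_of_prefix_chain[OF chain unbounded] by blast
  have silent: "visible tau D (st (matched_right N)) (map t [0..<n]) = []" for n
    using visible_silent[of "map t [0..<n]" tau D "st (matched_right N)"] t(2) by auto
  have prefix_g: "prefix_trace tau D (st dy) g (length (matched_path N) + n) = prefix_trace tau D (st dx) f N" for n
  proof -
    have "map g [0..<length (matched_path N) + n] = ys n"
      using g(2)[of n] by (simp add: ys_def)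
    then show ?thesis
      using matched_path_invariant[of N] silent by (simp add: prefix_trace_def ys_def visible_append)
  qed
  have prefix_f: "prefix_trace tau D (st dx) f n = prefix_trace tau D (st dx) f N" if "N \<le> n" for n
    using matched_path_invariant[of n] matched_path_invariant[of N] stuck[OF that] by simp
  have "D (st dy) = D (st dx)"
    using same_colour[OF related] by simp
  then have "inf_ctrace tau D (st dy) g = inf_ctrace tau D (st dx) f"
    using prefix_g prefix_f by (rule inf_ctrace_eq_if_prefix_trace_eventually_eq)
  then show ?thesis
    using g by blast
qed

end

lemma inf_path_matching:
  assumes "R dx dy" "inf_path tr (st dx) f"
  shows "\<exists>g. inf_path tr (st dy) g \<and> inf_ctrace tau D (st dy) g = inf_ctrace tau D (st dx) f"
proof (cases "\<forall>k. \<exists>n. k < length (matched_path dx dy f n)")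
  case True
  then show ?thesis
    using inf_path_matching_unbounded[OF assms] by blast
next
  case False
  then obtain K where "\<And>n. length (matched_path dx dy f n) \<le> K"
    by (meson not_le)
  then show ?thesis
    using inf_path_matching_bounded[OF assms] by blast
qed

lemma ctraces_subset:
  assumes "R dx dy"
  shows "ctraces tau tr D (st dx) \<subseteq> ctraces tau tr D (st dy)"
proof
  fix c
  assume "c \<in> ctraces tau tr D (st dx)"
  then consider xs where "fin_path tr (st dx) xs" "c = fin_ctrace tau D (st dx) xs"
    | f where "inf_path tr (st dx) f" "c = inf_ctrace tau D (st dx) f"
    unfolding ctraces_def by blast
  then show "c \<in> ctraces tau tr D (st dy)"
  proof cases
    case 1
    then obtain ys where "fin_path tr (st dy) ys" "visible tau D (st dy) ys = visible tau D (st dx) xs"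
      using fin_path_matching[OF assms] by blast
    then show ?thesis
      using 1 same_colour[OF assms] unfolding ctraces_def by (auto simp: fin_ctrace_eq_visible)
  next
    case 2
    then show ?thesis
      using inf_path_matching[OF assms 2(1)] unfolding ctraces_def by auto
  qed
qed

lemma div_ctraces_subset:
  assumes "R dx dy"
  shows "div_ctraces tau tr D (st dx) \<subseteq> div_ctraces tau tr D (st dy)"
proof
  fix c
  assume "c \<in> div_ctraces tau tr D (st dx)"
  then obtain f where f: "inf_path tr (st dx) f" "finite (inf_visible tau D (st dx) f)"
    "c = inf_ctrace tau D (st dx) f"
    unfolding div_ctraces_def by blast
  then obtain g where g: "inf_path tr (st dy) g" "inf_ctrace tau D (st dy) g = c"
    using inf_path_matching[OF assms f(1)] by auto
  have "finite (inf_visible tau D (st dy) g)"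
    using g(2) f(2,3) by (auto simp: inf_ctrace_def Let_def split: if_splits)
  then show "c \<in> div_ctraces tau tr D (st dy)"
    using g unfolding div_ctraces_def by auto
qed

end

lemma FinT_in_ctracesE:
  assumes "FinT c l \<in> ctraces tau tr C p"
  obtains zs where "fin_path tr p zs" "visible tau C p zs = l"
  using assms unfolding ctraces_def
proof safe
  fix xs
  assume "FinT c l = fin_ctrace tau C p xs" "fin_path tr p xs"
  then show thesis
    using that by (simp add: fin_ctrace_eq_visible)
next
  fix f
  assume eq: "FinT c l = inf_ctrace tau C p f" and path: "inf_path tr p f"
  then have finite: "finite (inf_visible tau C p f)"
    by (auto simp: inf_ctrace_def Let_def split: if_splits)
  then have "map (coloured_step C f) (sorted_list_of_set (inf_visible tau C p f)) = l"
    using eq by (simp add: inf_ctrace_def Let_def coloured_step_def[symmetric])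
  moreover obtain B where
    "prefix_trace tau C p f B = map (coloured_step C f) (sorted_list_of_set (inf_visible tau C p f))"
    using prefix_trace_eventually_const[OF finite] by blast
  ultimately show thesis
    using that[of "map f [0..<B]"] fin_path_inf_path_prefix[OF path, of B] by (simp add: prefix_trace_def)
qed

lemma consistent_step_transfer:
  assumes "consistent tau tr C" "C p = C p'" "tr p a p1"
  shows "(a = tau \<and> C p1 = C p) \<or>
    (\<exists>ys z. fin_path tr p' (ys @ [(a, z)]) \<and> (\<forall>q\<in>set ys. fst q = tau \<and> C (snd q) = C p') \<and> C z = C p1)"
proof (cases "a = tau \<and> C p1 = C p")
  case visible_step: False
  have "fin_ctrace tau C p [(a, p1)] \<in> ctraces tau tr C p"
    using assms(3) unfolding ctraces_def by force
  moreover have "fin_ctrace tau C p [(a, p1)] = FinT (C p') [(a, C p1)]"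
    using visible_step assms(2) by (auto simp: fin_ctrace_eq_visible)
  moreover have "ctraces tau tr C p = ctraces tau tr C p'"
    using assms(1,2) unfolding consistent_def by blast
  ultimately obtain zs where zs: "fin_path tr p' zs" "visible tau C p' zs = [(a, C p1)]"
    by (metis FinT_in_ctracesE)
  obtain ys z rest where "zs = ys @ (a, z) # rest" "\<forall>q\<in>set ys. fst q = tau \<and> C (snd q) = C p'" "C z = C p1"
    using visible_eq_singletonE[OF zs(2)] by blast
  moreover have "fin_path tr p' (ys @ [(a, z)])"
    using zs(1) calculation(1) by (simp add: fin_path_append)
  ultimately show ?thesis
    by blast
qed simp

lemma div_preserving_transfer:
  assumes "div_preserving tau tr C" "C p = C p'" "inf_path tr p f"
    and silent: "\<forall>i. fst (f i) = tau \<and> C (snd (f i)) = C p"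
  obtains g where "inf_path tr p' g" "\<forall>i. fst (g i) = tau \<and> C (snd (g i)) = C p'"
proof -
  have "C (inf_state p f i) = C p" for i
    using silent by (cases i) auto
  then have no_visible: "inf_visible tau C p f = {}"
    using silent by (auto simp: inf_visible_def)
  then have "inf_ctrace tau C p f \<in> div_ctraces tau tr C p"
    using assms(3) unfolding div_ctraces_def by auto
  moreover have "div_ctraces tau tr C p = div_ctraces tau tr C p'"
    using assms(1,2) unfolding div_preserving_def by blast
  ultimately obtain g where g: "inf_path tr p' g" "finite (inf_visible tau C p' g)"
    "inf_ctrace tau C p f = inf_ctrace tau C p' g"
    unfolding div_ctraces_def by blast
  then have "inf_visible tau C p' g = {}"
    using no_visible by (simp add: inf_ctrace_def Let_def split: if_splits)
  then have "\<forall>i. fst (g i) = tau \<and> C (snd (g i)) = C (inf_state p' g i)"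
    by (auto simp: inf_visible_def)
  then have "\<forall>i. fst (g i) = tau \<and> C (snd (g i)) = C p'"
    using inf_state_silent by metis
  then show thesis
    using that g(1) by blast
qed

lemma consistent_step_transfer_map:
  assumes "consistent tau tr C" "C p = C p'" "tr p a p1"
    and lift: "\<And>x b y. tr x b y \<Longrightarrow> tr (K x) b (K y)"
    and colour: "\<And>w. C w = C p' \<Longrightarrow> D (K w) = D (K p')"
  obtains (inert) "a = tau" "C p1 = C p"
    | (answer) ys z where "fin_path tr (K p') (ys @ [(a, K z)])"
      "\<forall>r\<in>set ys. fst r = tau \<and> D (snd r) = D (K p')" "C z = C p1"
  using consistent_step_transfer[OF assms(1-3)]
proof (elim disjE exE conjE)
  fix ys z
  assume path: "fin_path tr p' (ys @ [(a, z)])" and silent: "\<forall>q\<in>set ys. fst q = tau \<and> C (snd q) = C p'"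
    and "C z = C p1"
  have "fin_path tr (K p') (map (apsnd K) (ys @ [(a, z)]))"
    using lift path by (rule fin_path_map)
  moreover have "\<forall>r\<in>set (map (apsnd K) ys). fst r = tau \<and> D (snd r) = D (K p')"
    using silent by (auto intro: colour)
  ultimately show thesis
    using answer \<open>C z = C p1\<close> by simp
qed (rule inert)

lemma div_preserving_transfer_map:
  assumes "div_preserving tau tr C" "inf_path tr x f" "C x = C p'"
    and silent: "\<forall>k. fst (f k) = tau \<and> C (snd (f k)) = C p'"
    and lift: "\<And>x b y. tr x b y \<Longrightarrow> tr (K x) b (K y)"
    and colour: "\<And>w. C w = C p' \<Longrightarrow> D (K w) = D (K p')"
  shows "\<exists>g. inf_path tr (K p') g \<and> (\<forall>k. fst (g k) = tau \<and> D (snd (g k)) = D (K p'))"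
proof -
  obtain g where g: "inf_path tr p' g" "\<forall>k. fst (g k) = tau \<and> C (snd (g k)) = C p'"
    using div_preserving_transfer[OF assms(1,3,2)] silent assms(3) by auto
  have "inf_path tr (K p') (apsnd K \<circ> g)"
    using lift g(1) by (rule inf_path_map)
  moreover have "\<forall>k. fst ((apsnd K \<circ> g) k) = tau \<and> D (snd ((apsnd K \<circ> g) k)) = D (K p')"
    using g(2) by (auto intro: colour)
  ultimately show ?thesis
    by blast
qed

section \<open>Merges of consistent, divergence preserving colourings\<close>

lemma inf_path_enumerate_steps:
  assumes infinite: "infinite I"
    and steps: "\<And>i. i \<in> I \<Longrightarrow> tr (P i) tau (P (Suc i))"
    and idle: "\<And>i. i \<notin> I \<Longrightarrow> P (Suc i) = P i"
  obtains f where "inf_path tr (P (enumerate I 0)) f" "\<And>k. fst (f k) = tau \<and> snd (f k) \<in> range P"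
proof -
  let ?e = "enumerate I"
  have P_between: "P j = P (Suc (?e k))" if lo: "Suc (?e k) \<le> j" and hi: "j \<le> ?e (Suc k)" for k j
    using lo
  proof (induction j rule: dec_induct)
    case (step n)
    have "n \<notin> I"
    proof
      assume "n \<in> I"
      moreover have "n < ?e (Suc k)"
        using step.hyps(2) hi by simp
      ultimately obtain m where "m < Suc k" "n = ?e m"
        using in_set_below_enumerate[OF infinite] by blast
      then have "n \<le> ?e k"
        using infinite by (simp add: less_Suc_eq_le)
      then show False
        using step.hyps(1) by simp
    qed
    then show ?case
      using idle step.IH by simp
  qed simp
  define f where "f k = (tau, P (Suc (?e k)))" for k
  have "inf_state (P (?e 0)) f k = P (?e k)" for k
  proof (cases k)
    case (Suc j)
    then show ?thesis
      using P_between[of j "?e (Suc j)"] enumerate_step[OF infinite, of j] by (simp add: f_def Suc_leI)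
  qed simp
  then have "inf_path tr (P (?e 0)) f"
    using enumerate_in_set[OF infinite] steps by (auto simp: inf_path_def f_def)
  then show thesis
    by (rule that) (simp add: f_def)
qed

lemma interleaved_divergence:
  assumes step: "\<And>i. (tr (P i) tau (P (Suc i)) \<and> Q (Suc i) = Q i) \<or> (P (Suc i) = P i \<and> tr (Q i) tau (Q (Suc i)))"
  obtains (left) i f where "inf_path tr (P i) f" "\<And>k. fst (f k) = tau \<and> snd (f k) \<in> range P"
    | (right) i f where "inf_path tr (Q i) f" "\<And>k. fst (f k) = tau \<and> snd (f k) \<in> range Q"
proof -
  define I where "I = {i. tr (P i) tau (P (Suc i)) \<and> Q (Suc i) = Q i}"
  have idle: "P (Suc i) = P i" and right_step: "tr (Q i) tau (Q (Suc i))" if "i \<notin> I" for i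
    using step[of i] that unfolding I_def by auto
  show thesis
  proof (cases "finite I")
    case False
    have "\<exists>f. inf_path tr (P (enumerate I 0)) f \<and> (\<forall>k. fst (f k) = tau \<and> snd (f k) \<in> range P)"
      by (rule inf_path_enumerate_steps[where tr = tr and P = P and tau = tau, OF False]) (simp add: I_def, erule idle, blast)
    then show thesis
      using left by blast
  next
    case True
    then obtain N where N: "I \<subseteq> {..<N}"
      using finite_nat_bounded by blast
    define f where "f k = (tau, Q (Suc (N + k)))" for k
    have "inf_state (Q N) f k = Q (N + k)" for k
      by (cases k) (auto simp: f_def)
    then have "inf_path tr (Q N) f"
      using N right_step by (force simp: inf_path_def f_def)
    then show thesis
      by (rule right) (simp add: f_def)
  qed
qed

locale merged_colourings =
  fixes tau :: 'a and tr :: "'s \<Rightarrow> 'a \<Rightarrow> 's \<Rightarrow> bool" and mrg :: "'s \<Rightarrow> 's \<Rightarrow> 's"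
    and C1 C2 :: "'s \<Rightarrow> 's set"
  assumes merge: "is_merge tr mrg"
    and consistent1: "consistent tau tr C1" and div_preserving1: "div_preserving tau tr C1"
    and consistent2: "consistent tau tr C2" and div_preserving2: "div_preserving tau tr C2"
begin

definition related_merges :: "('s \<times> 's) set" where
  "related_merges = {(mrg p q, mrg p' q') | p q p' q'. C1 p = C1 p' \<and> C2 q = C2 q'}"

definition merge_colour :: "'s \<Rightarrow> 's set" where
  "merge_colour x = related_merges\<^sup>* `` {x}"

lemma merge_colour_eq_iff: "merge_colour x = merge_colour y \<longleftrightarrow> (x, y) \<in> related_merges\<^sup>*"
proof
  assume "merge_colour x = merge_colour y"
  then have "y \<in> merge_colour x"
    by (simp add: merge_colour_def)
  then show "(x, y) \<in> related_merges\<^sup>*"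
    by (simp add: merge_colour_def)
next
  assume xy: "(x, y) \<in> related_merges\<^sup>*"
  have "sym related_merges"
    unfolding related_merges_def sym_def by blast
  then have "(y, x) \<in> related_merges\<^sup>*"
    using xy by (blast dest: sym_rtrancl symD)
  then show "merge_colour x = merge_colour y"
    using xy unfolding merge_colour_def by (auto intro: rtrancl_trans)
qed

lemma merge_colour_mrg: "C1 p = C1 p' \<Longrightarrow> C2 q = C2 q' \<Longrightarrow> merge_colour (mrg p q) = merge_colour (mrg p' q')"
  unfolding merge_colour_eq_iff by (intro r_into_rtrancl) (auto simp: related_merges_def)

lemma merge_step: "tr (mrg p q) a u \<longleftrightarrow> (\<exists>p'. tr p a p' \<and> u = mrg p' q) \<or> (\<exists>q'. tr q a q' \<and> u = mrg p q')"
  using merge unfolding is_merge_def by blast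

lemma merge_step_left: "tr p a p' \<Longrightarrow> tr (mrg p q) a (mrg p' q)"
  by (auto simp: merge_step)

lemma merge_step_right: "tr q a q' \<Longrightarrow> tr (mrg p q) a (mrg p q')"
  by (auto simp: merge_step)

fun pair_related :: "'s \<times> 's \<Rightarrow> 's \<times> 's \<Rightarrow> bool" where
  "pair_related (p, q) (p', q') \<longleftrightarrow> C1 p = C1 p' \<and> C2 q = C2 q'"

fun pair_step :: "'s \<times> 's \<Rightarrow> 'a \<Rightarrow> 's \<times> 's \<Rightarrow> bool" where
  "pair_step (p, q) a (p1, q1) \<longleftrightarrow> (tr p a p1 \<and> q1 = q) \<or> (p1 = p \<and> tr q a q1)"

lemma left_step_matching:
  assumes C1: "C1 p = C1 p'" and C2: "C2 q = C2 q'" and step: "tr p a p1"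
  shows "\<exists>dx' dy' seg. matching_step tau tr merge_colour (case_prod mrg) pair_step pair_related
    (p, q) (p', q') a (mrg p1 q) dx' dy' seg"
proof (rule consistent_step_transfer_map[OF consistent1 C1 step, where K = "\<lambda>w. mrg w q'" and D = merge_colour])
  show "tr (mrg x q') b (mrg y q')" if "tr x b y" for x b y
    using that by (rule merge_step_left)
  show "merge_colour (mrg w q') = merge_colour (mrg p' q')" if "C1 w = C1 p'" for w
    using that by (rule merge_colour_mrg[OF _ refl])
next
  assume "a = tau" "C1 p1 = C1 p"
  then show ?thesis
    using step C1 C2
    by (intro exI[of _ "(p1, q)"] exI[of _ "(p', q')"] exI[of _ "[]"]) (auto simp: matching_step_def)
next
  fix ys z
  assume "fin_path tr (mrg p' q') (ys @ [(a, mrg z q')])" "C1 z = C1 p1"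
    "\<forall>r\<in>set ys. fst r = tau \<and> merge_colour (snd r) = merge_colour (mrg p' q')"
  then show ?thesis
    using step C1 C2
    by (intro exI[of _ "(p1, q)"] exI[of _ "(z, q')"] exI[of _ "ys @ [(a, mrg z q')]"])
      (auto simp: matching_step_def)
qed

lemma right_step_matching:
  assumes C1: "C1 p = C1 p'" and C2: "C2 q = C2 q'" and step: "tr q a q1"
  shows "\<exists>dx' dy' seg. matching_step tau tr merge_colour (case_prod mrg) pair_step pair_related
    (p, q) (p', q') a (mrg p q1) dx' dy' seg"
proof (rule consistent_step_transfer_map[OF consistent2 C2 step, where K = "\<lambda>w. mrg p' w" and D = merge_colour])
  show "tr (mrg p' x) b (mrg p' y)" if "tr x b y" for x b y
    using that by (rule merge_step_right)
  show "merge_colour (mrg p' w) = merge_colour (mrg p' q')" if "C2 w = C2 q'" for w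
    using that by (rule merge_colour_mrg[OF refl])
next
  assume "a = tau" "C2 q1 = C2 q"
  then show ?thesis
    using step C1 C2
    by (intro exI[of _ "(p, q1)"] exI[of _ "(p', q')"] exI[of _ "[]"]) (auto simp: matching_step_def)
next
  fix ys z
  assume "fin_path tr (mrg p' q') (ys @ [(a, mrg p' z)])" "C2 z = C2 q1"
    "\<forall>r\<in>set ys. fst r = tau \<and> merge_colour (snd r) = merge_colour (mrg p' q')"
  then show ?thesis
    using step C1 C2
    by (intro exI[of _ "(p, q1)"] exI[of _ "(p', z)"] exI[of _ "ys @ [(a, mrg p' z)]"])
      (auto simp: matching_step_def)
qed

lemma pair_step_matching:
  assumes "pair_related dx dy" "tr (case_prod mrg dx) a x'"
  shows "\<exists>dx' dy' seg. matching_step tau tr merge_colour (case_prod mrg) pair_step pair_related dx dy a x' dx' dy' seg"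
proof -
  obtain p q p' q' where dx: "dx = (p, q)" and dy: "dy = (p', q')"
    by (cases dx, cases dy)
  have C1: "C1 p = C1 p'" and C2: "C2 q = C2 q'"
    using assms(1) dx dy by auto
  from assms(2) dx consider p1 where "tr p a p1" "x' = mrg p1 q" | q1 where "tr q a q1" "x' = mrg p q1"
    by (auto simp: merge_step)
  then show ?thesis
    by cases (use left_step_matching[OF C1 C2] right_step_matching[OF C1 C2] dx dy in auto)
qed

lemma pair_divergence_matching:
  assumes steps: "\<And>i. pair_step (h i) tau (h (Suc i)) \<and> pair_related (h i) dy"
  shows "\<exists>f. inf_path tr (case_prod mrg dy) f \<and>
    (\<forall>i. fst (f i) = tau \<and> merge_colour (snd (f i)) = merge_colour (case_prod mrg dy))"
proof -
  obtain p' q' where dy: "dy = (p', q')"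
    by (cases dy)
  define P where "P i = fst (h i)" for i
  define Q where "Q i = snd (h i)" for i
  have h: "h i = (P i, Q i)" for i
    by (simp add: P_def Q_def)
  have C1: "C1 (P i) = C1 p'" and C2: "C2 (Q i) = C2 q'" for i
    using steps[of i] dy h[of i] by auto
  have "(tr (P i) tau (P (Suc i)) \<and> Q (Suc i) = Q i) \<or> (P (Suc i) = P i \<and> tr (Q i) tau (Q (Suc i)))" for i
    using steps[of i] h[of i] h[of "Suc i"] by simp
  then show ?thesis
  proof (cases rule: interleaved_divergence[where P = P and Q = Q])
    case (left i f)
    then have "\<forall>k. fst (f k) = tau \<and> C1 (snd (f k)) = C1 p'"
      using C1 by (metis rangeE)
    then show ?thesis
      unfolding dy case_prod_conv
      by (rule div_preserving_transfer_map[OF div_preserving1 left(1) C1, where K = "\<lambda>w. mrg w q'" and D = merge_colour])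
        (erule merge_step_left, erule merge_colour_mrg[OF _ refl])
  next
    case (right i f)
    then have "\<forall>k. fst (f k) = tau \<and> C2 (snd (f k)) = C2 q'"
      using C2 by (metis rangeE)
    then show ?thesis
      unfolding dy case_prod_conv
      by (rule div_preserving_transfer_map[OF div_preserving2 right(1) C2, where K = "\<lambda>w. mrg p' w" and D = merge_colour])
        (erule merge_step_right, erule merge_colour_mrg[OF refl])
  qed
qed

lemma path_matching_pairs: "path_matching tau tr merge_colour (case_prod mrg) pair_step pair_related"
proof
  fix dx dy
  assume "pair_related dx dy"
  moreover obtain p q p' q' where "dx = (p, q)" "dy = (p', q')"
    by (cases dx, cases dy)
  ultimately show "merge_colour (case_prod mrg dx) = merge_colour (case_prod mrg dy)"
    using merge_colour_mrg[of p p' q q'] by simp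
qed (fact pair_step_matching pair_divergence_matching)+

lemma merge_colour_consistent_div_preserving:
  "consistent tau tr merge_colour \<and> div_preserving tau tr merge_colour"
proof -
  interpret path_matching tau tr merge_colour "case_prod mrg" pair_step pair_related
    by (rule path_matching_pairs)
  have "ctraces tau tr merge_colour x = ctraces tau tr merge_colour y \<and>
        div_ctraces tau tr merge_colour x = div_ctraces tau tr merge_colour y"
    if "(x, y) \<in> related_merges\<^sup>*" for x y
    using that
  proof (induction rule: rtrancl_induct)
    case (step y z)
    then obtain p q p' q' where yz: "y = mrg p q" "z = mrg p' q'" and
      related: "pair_related (p, q) (p', q')" "pair_related (p', q') (p, q)"
      unfolding related_merges_def by auto
    have "ctraces tau tr merge_colour y = ctraces tau tr merge_colour z"
      using ctraces_subset[OF related(1)] ctraces_subset[OF related(2)] yz by auto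
    moreover have "div_ctraces tau tr merge_colour y = div_ctraces tau tr merge_colour z"
      using div_ctraces_subset[OF related(1)] div_ctraces_subset[OF related(2)] yz by auto
    ultimately show ?case
      using step.IH by simp
  qed simp
  then show ?thesis
    unfolding consistent_def div_preserving_def by (simp add: merge_colour_eq_iff)
qed

end

theorem theorem5p2:
  fixes tau :: 'a and tr :: "'s \<Rightarrow> 'a \<Rightarrow> 's \<Rightarrow> bool" and mrg :: "'s \<Rightarrow> 's \<Rightarrow> 's"
  assumes "is_merge tr mrg"
    and "bbisim_div tau tr s t"
    and "bbisim_div tau tr u v"
  shows "bbisim_div tau tr (mrg s u) (mrg t v)"
proof -
  obtain C1 :: "'s \<Rightarrow> 's set" where C1: "consistent tau tr C1" "div_preserving tau tr C1" "C1 s = C1 t"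
    using assms(2) unfolding bbisim_div_def by blast
  obtain C2 :: "'s \<Rightarrow> 's set" where C2: "consistent tau tr C2" "div_preserving tau tr C2" "C2 u = C2 v"
    using assms(3) unfolding bbisim_div_def by blast
  interpret merged_colourings tau tr mrg C1 C2
    using assms(1) C1 C2 by unfold_locales
  show ?thesis
    unfolding bbisim_div_def
    using merge_colour_consistent_div_preserving merge_colour_mrg[OF C1(3) C2(3)]
    by (intro exI[of _ merge_colour]) simp
qed

end
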